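(* Let $\mathbb{C}[X]^*$ be the linear dual of $\mathbb{C}[X]$ with the convolution product $(f*g)(X^n)=\sum_{k=0}^n\binom{n}{k}f(X^k)g(X^{n-k})$, let $I=\{f\in\mathbb{C}[X]^*\mid f(1)=0\}$, let $\mathbb{C}[X]^{\circ}$ be the subalgebra of those $f\in\mathbb{C}[X]^*$ vanishing on some non-zero ideal of $\mathbb{C}[X]$ (the linearly recursive sequences), and $J=I\cap\mathbb{C}[X]^{\circ}$. Let $\widehat{\iota}:\varprojlim_n\mathbb{C}[X]^\circ/J^n\to\varprojlim_n\mathbb{C}[X]^*/I^n\cong\mathbb{C}[X]^*$ be the map induced by the inclusion. Then $\widehat{\iota}$ is a split surjection which is not injective; consequently the $J$-adic topology on $\mathbb{C}[X]^\circ$ is strictly finer than (and not equivalent to) the topology induced from the $I$-adic topology on $\mathbb{C}[X]^*$. Explicitly, with $\xi(X^n)=\delta_{n,1}$ and $\phi_1(X^n)=1$ for all $n$, the element $\big(\phi_1-\sum_{k=0}^n\frac{1}{k!}\xi^k+J^{n+1}\big)_{n\geq0}$ is a non-zero element of the kernel of $\widehat{\iota}$.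
   Context: Under $f\mapsto\sum_{k\geq0}f(X^k/k!)Z^k$, $\mathbb{C}[X]^*\cong\mathbb{C}[[Z]]$ as algebras and $I^n$ corresponds to $\langle Z^n\rangle$; the $I$-adic topology corresponds to the Krull topology. Powers $\xi^k$ are taken in the convolution product with $\xi^0$ the unit $\varepsilon$, $\varepsilon(X^n)=\delta_{n,0}$. *)

theory Defs
  imports "HOL-Analysis.Analysis" "HOL-Computational_Algebra.Polynomial" "HOL-Library.Function_Algebras"
begin

text \<open>An element f of the linear dual C[X]* is represented by its values on the
monomial basis: f n = f(X^n).\<close>

type_synonym dual = "nat \<Rightarrow> complex"

definition dual_app :: "dual \<Rightarrow> complex poly \<Rightarrow> complex" where
  "dual_app f q = (\<Sum>i\<le>degree q. coeff q i * f i)"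

definition conv :: "dual \<Rightarrow> dual \<Rightarrow> dual" where
  "conv f g = (\<lambda>n. \<Sum>k\<le>n. of_nat (n choose k) * f k * g (n - k))"

definition eps :: dual where
  "eps = (\<lambda>n. if n = 0 then 1 else 0)"

primrec cpow :: "dual \<Rightarrow> nat \<Rightarrow> dual" where
  "cpow f 0 = eps"
| "cpow f (Suc k) = conv f (cpow f k)"

definition xi :: dual where
  "xi = (\<lambda>n. if n = 1 then 1 else 0)"

definition phi1 :: dual where
  "phi1 = (\<lambda>n. 1)"

definition poly_ideal :: "complex poly set \<Rightarrow> bool" where
  "poly_ideal K \<longleftrightarrow> 0 \<in> K \<and> (\<forall>a\<in>K. \<forall>b\<in>K. a + b \<in> K) \<and> (\<forall>a\<in>K. \<forall>q. q * a \<in> K)"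

definition linrec :: "dual set" where
  "linrec = {f. \<exists>K. poly_ideal K \<and> K \<noteq> {0} \<and> (\<forall>q\<in>K. dual_app f q = 0)}"

definition augI :: "dual set" where
  "augI = {f. f 0 = 0}"

definition augJ :: "dual set" where
  "augJ = augI \<inter> linrec"

primrec prods :: "dual set \<Rightarrow> nat \<Rightarrow> dual set" where
  "prods K 0 = {eps}"
| "prods K (Suc n) = {conv a b | a b. a \<in> K \<and> b \<in> prods K n}"

definition ideal_pow :: "dual set \<Rightarrow> dual set \<Rightarrow> nat \<Rightarrow> dual set" where
  "ideal_pow A K n = {f. \<exists>(F::nat set) a p. finite F \<and> (\<forall>i\<in>F. a i \<in> A \<and> p i \<in> prods K n)
       \<and> f = (\<Sum>i\<in>F. conv (a i) (p i))}"

definition Ipow :: "nat \<Rightarrow> dual set" where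
  "Ipow n = ideal_pow UNIV augI n"

definition Jpow :: "nat \<Rightarrow> dual set" where
  "Jpow n = ideal_pow linrec augJ n"

text \<open>Inverse limit of A / P(n+1), n >= 0, as compatible sequences of representatives
(index n carries a class modulo P(n+1)), together with equality of elements.\<close>
definition inv_lim :: "dual set \<Rightarrow> (nat \<Rightarrow> dual set) \<Rightarrow> (nat \<Rightarrow> dual) set" where
  "inv_lim A P = {a. (\<forall>n. a n \<in> A) \<and> (\<forall>n. a (Suc n) - a n \<in> P (Suc n))}"

definition lim_eq :: "(nat \<Rightarrow> dual set) \<Rightarrow> (nat \<Rightarrow> dual) \<Rightarrow> (nat \<Rightarrow> dual) \<Rightarrow> bool" where
  "lim_eq P a b \<longleftrightarrow> (\<forall>n. a n - b n \<in> P (Suc n))"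

definition adic_topology :: "dual set \<Rightarrow> (nat \<Rightarrow> dual set) \<Rightarrow> dual topology" where
  "adic_topology S P = topology (\<lambda>U. U \<subseteq> S \<and> (\<forall>x\<in>U. \<exists>n. \<forall>y\<in>P n. x + y \<in> U))"

end

theory Submission
  imports Defs "HOL-Computational_Algebra.Fundamental_Theorem_Algebra"
    "HOL-Computational_Algebra.Field_as_Ring" "HOL-Computational_Algebra.Polynomial_Factorial"
begin

text \<open>Under the exponential generating function the convolution becomes the product of power
series, so \<open>I\<^sup>n\<close> consists of the functionals vanishing on \<open>X\<^sup>k\<close> for \<open>k < n\<close>. A functional
that vanishes below \<open>n\<close> and has finite support is a linearly recursive multiple of \<open>\<xi>\<^sup>n\<close>,
hence lies in \<open>J\<^sup>n\<close>; truncating the representatives of an \<open>I\<close>-adic limit therefore gives a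
multiplicative section.

For non-injectivity, a linearly recursive sequence is uniquely a finite sum of generalised
eigenvectors \<open>f\<^sub>c\<close> of the shift (its generating function is \<open>\<Sum> p\<^sub>c(z) e\<^sup>c\<^sup>z\<close>), and the
eigenvalues add under convolution. Hence \<open>f \<mapsto> \<Sum> c f\<^sub>c(0)\<close> is a derivation of
\<open>\<complex>[X]\<^sup>\<circ>\<close> at the counit: it vanishes on \<open>J\<^sup>2\<close> but is \<open>1\<close> on \<open>\<phi>\<^sub>1\<close> minus the indicator
of \<open>{0..n}\<close>, an element of \<open>J\<close> lying in \<open>I\<^bsup>n+1\<^esup>\<close>.\<close>

lemma sum_fun_apply: "(\<Sum>k\<in>A. f k) x = (\<Sum>k\<in>A. f k x)"
  by (induction A rule: infinite_finite_induct) auto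

lemma lambda_zero_dual [simp]: "(\<lambda>n. 0) = (0 :: dual)"
  by (simp add: zero_fun_def)

section \<open>Exponential generating functions\<close>

definition egf :: "dual \<Rightarrow> complex fps" where
  "egf f = Abs_fps (\<lambda>n. f n / fact n)"

definition dual_of_egf :: "complex fps \<Rightarrow> dual" where
  "dual_of_egf F = (\<lambda>n. fact n * fps_nth F n)"

lemma fps_nth_egf [simp]: "fps_nth (egf f) n = f n / fact n"
  by (simp add: egf_def)

lemma egf_inject: "egf f = egf g \<Longrightarrow> f = g"
proof
  fix n assume "egf f = egf g"
  then have "fps_nth (egf f) n = fps_nth (egf g) n" by simp
  then show "f n = g n" by simp
qed

lemma egf_dual_of_egf [simp]: "egf (dual_of_egf F) = F"
  by (rule fps_ext) (simp add: dual_of_egf_def)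

lemma egf_conv: "egf (conv f g) = egf f * egf g"
proof (rule fps_ext)
  fix n
  have "fps_nth (egf f * egf g) n = (\<Sum>i\<le>n. f i / fact i * (g (n - i) / fact (n - i)))"
    by (simp add: fps_mult_nth atLeast0AtMost)
  also have "\<dots> = (\<Sum>i\<le>n. of_nat (n choose i) * f i * g (n - i) / fact n)"
    by (rule sum.cong) (auto simp: binomial_fact field_simps)
  finally show "fps_nth (egf (conv f g)) n = fps_nth (egf f * egf g) n"
    by (simp add: conv_def sum_divide_distrib)
qed

lemma egf_add: "egf (f + g) = egf f + egf g"
  by (rule fps_ext) (simp add: add_divide_distrib)

lemma egf_zero: "egf 0 = 0"
  by (rule fps_ext) simp

lemma egf_eps: "egf eps = 1"
  by (rule fps_ext) (simp add: eps_def)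

lemma egf_xi: "egf xi = fps_X"
  by (rule fps_ext) (simp add: xi_def fps_X_nth)

lemma egf_cpow: "egf (cpow f k) = egf f ^ k"
  by (induction k) (simp_all add: egf_eps egf_conv)

lemma conv_assoc: "conv (conv f g) h = conv f (conv g h)"
  by (rule egf_inject) (simp add: egf_conv mult.assoc)

lemma conv_add_left: "conv (f + g) h = conv f h + conv g h"
  by (rule egf_inject) (simp add: egf_conv egf_add distrib_right)

lemma conv_add_right: "conv h (f + g) = conv h f + conv h g"
  by (rule egf_inject) (simp add: egf_conv egf_add distrib_left)

lemma conv_zero_left [simp]: "conv 0 f = 0"
  by (rule egf_inject) (simp add: egf_conv egf_zero)

lemma conv_zero_right [simp]: "conv f 0 = 0"
  by (rule egf_inject) (simp add: egf_conv egf_zero)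

lemma conv_eps_right [simp]: "conv f eps = f"
  by (rule egf_inject) (simp add: egf_conv egf_eps)

lemma conv_sum_left: "finite A \<Longrightarrow> conv (\<Sum>i\<in>A. g i) h = (\<Sum>i\<in>A. conv (g i) h)"
  by (induction A rule: finite_induct)
    (simp_all only: sum.empty sum.insert conv_zero_left conv_add_left not_False_eq_True)

lemma conv_sum_right: "finite A \<Longrightarrow> conv h (\<Sum>i\<in>A. g i) = (\<Sum>i\<in>A. conv h (g i))"
  by (induction A rule: finite_induct)
    (simp_all only: sum.empty sum.insert conv_zero_right conv_add_right not_False_eq_True)

lemma conv_at_0: "conv f g 0 = f 0 * g 0"
  by (simp add: conv_def)

lemma cpow_xi: "cpow xi k m = (if m = k then fact k else 0)"
proof -
  have "fps_nth (egf (cpow xi k)) m = fps_nth (fps_X ^ k) m"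
    by (simp only: egf_cpow egf_xi)
  then show ?thesis by (cases "m = k") auto
qed

lemma conv_xi_power_factor:
  assumes "\<forall>k<N. f k = 0"
  shows "f = conv (dual_of_egf (fps_shift N (egf f))) (cpow xi N)"
proof (rule egf_inject)
  have "egf f = fps_shift N (egf f) * fps_X ^ N"
    using assms by (intro fps_ext) (auto simp: fps_X_power_mult_right_nth)
  then show "egf f = egf (conv (dual_of_egf (fps_shift N (egf f))) (cpow xi N))"
    by (simp add: egf_conv egf_cpow egf_xi)
qed

section \<open>Polynomials acting through the shift\<close>

text \<open>\<open>shift_act P f\<close> is \<open>P(S) f\<close> for the shift \<open>S f = (\<lambda>n. f (Suc n))\<close>; as a functional,
\<open>shift_act P f (n) = f (X\<^sup>n P)\<close>.\<close>

definition shift_act :: "complex poly \<Rightarrow> dual \<Rightarrow> dual" where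
  "shift_act P f = (\<lambda>n. \<Sum>i\<le>degree P. coeff P i * f (n + i))"

lemma shift_act_bound:
  "degree P \<le> M \<Longrightarrow> shift_act P f n = (\<Sum>i\<le>M. coeff P i * f (n + i))"
  unfolding shift_act_def by (rule sum.mono_neutral_left) (auto simp: coeff_eq_0)

lemma shift_act_pCons: "shift_act (pCons a p) f n = a * f n + shift_act p f (Suc n)"
proof -
  have "shift_act (pCons a p) f n = (\<Sum>i\<le>Suc (degree p). coeff (pCons a p) i * f (n + i))"
    by (rule shift_act_bound) (simp add: degree_pCons_le)
  also have "\<dots> = a * f n + shift_act p f (Suc n)"
    by (subst sum.atMost_Suc_shift) (simp add: shift_act_def)
  finally show ?thesis .
qed

lemma shift_act_linear: "shift_act [:-c, 1:] f = (\<lambda>n. f (Suc n) - c * f n)"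
  by (rule ext) (simp add: shift_act_pCons shift_act_def)

lemma shift_act_0 [simp]: "shift_act 0 f = 0"
  by (simp add: shift_act_def fun_eq_iff)

lemma shift_act_one [simp]: "shift_act 1 f = f"
  by (simp add: shift_act_def fun_eq_iff)

lemma shift_act_zero [simp]: "shift_act P 0 = 0"
  by (simp add: shift_act_def fun_eq_iff)

lemma shift_act_add_poly: "shift_act (P + Q) f = shift_act P f + shift_act Q f"
proof
  fix n
  let ?M = "max (degree P) (degree Q)"
  have "shift_act (P + Q) f n = (\<Sum>i\<le>?M. coeff (P + Q) i * f (n + i))"
    by (rule shift_act_bound) (auto intro: degree_add_le)
  moreover have "shift_act P f n = (\<Sum>i\<le>?M. coeff P i * f (n + i))"
    and "shift_act Q f n = (\<Sum>i\<le>?M. coeff Q i * f (n + i))"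
    by (rule shift_act_bound, simp)+
  ultimately show "shift_act (P + Q) f n = (shift_act P f + shift_act Q f) n"
    by (simp add: distrib_right sum.distrib)
qed

lemma shift_act_smult: "shift_act (smult c P) f = (\<lambda>n. c * shift_act P f n)"
proof
  fix n
  have "shift_act (smult c P) f n = (\<Sum>i\<le>degree P. coeff (smult c P) i * f (n + i))"
    by (rule shift_act_bound) (simp add: degree_smult_le)
  then show "shift_act (smult c P) f n = c * shift_act P f n"
    by (simp add: shift_act_def sum_distrib_left mult.assoc)
qed

lemma shift_act_mult: "shift_act (P * Q) f = shift_act P (shift_act Q f)"
proof (induction P rule: pCons_induct)
  case (pCons a p)
  show ?case
  proof
    fix n
    have "shift_act (pCons a p * Q) f n = shift_act (smult a Q + pCons 0 (p * Q)) f n"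
      by simp
    also have "\<dots> = a * shift_act Q f n + shift_act (p * Q) f (Suc n)"
      by (simp add: shift_act_add_poly shift_act_smult shift_act_pCons)
    also have "\<dots> = shift_act (pCons a p) (shift_act Q f) n"
      by (simp add: shift_act_pCons pCons.IH)
    finally show "shift_act (pCons a p * Q) f n = shift_act (pCons a p) (shift_act Q f) n" .
  qed
qed simp

lemma shift_act_commute: "shift_act P (shift_act Q f) = shift_act Q (shift_act P f)"
  by (metis shift_act_mult mult.commute)

lemma shift_act_add: "shift_act P (f + g) = shift_act P f + shift_act P g"
  by (simp add: shift_act_def fun_eq_iff distrib_left sum.distrib)

lemma shift_act_diff: "shift_act P (f - g) = shift_act P f - shift_act P g"
  by (simp add: shift_act_def fun_eq_iff right_diff_distrib sum_subtractf)

lemma shift_act_sum: "finite A \<Longrightarrow> shift_act P (\<Sum>i\<in>A. g i) = (\<Sum>i\<in>A. shift_act P (g i))"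
  by (induction A rule: finite_induct)
    (simp_all only: sum.empty sum.insert shift_act_zero shift_act_add not_False_eq_True)

lemma shift_act_X_power: "shift_act ([:0, 1:] ^ m) f = (\<lambda>n. f (n + m))"
proof (induction m)
  case (Suc m)
  have "shift_act ([:0, 1:] ^ Suc m) f = shift_act [:-0, 1:] (shift_act ([:0, 1:] ^ m) f)"
    by (simp only: power_Suc shift_act_mult minus_zero)
  then show ?case by (simp only: Suc shift_act_linear) simp
qed simp

lemma shift_act_dvd: "P dvd Q \<Longrightarrow> shift_act P f = 0 \<Longrightarrow> shift_act Q f = 0"
  by (auto simp: dvd_def shift_act_mult mult.commute[of P])

lemma shift_act_linear_conv:
  "shift_act [:-(a + b), 1:] (conv f g)
     = conv (shift_act [:-a, 1:] f) g + conv f (shift_act [:-b, 1:] g)"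
proof -
  have diff_egf: "egf (shift_act [:-c, 1:] h) = fps_deriv (egf h) - fps_const c * egf h" for c h
    by (rule fps_ext) (simp add: shift_act_linear fact_Suc field_simps del: of_nat_Suc)
  show ?thesis
    by (rule egf_inject)
      (simp only: diff_egf egf_conv egf_add fps_deriv_mult fps_const_add[symmetric],
       simp add: algebra_simps del: fps_const_add)
qed

section \<open>Generalised eigenvectors of the shift\<close>

definition gen_eigen :: "complex \<Rightarrow> dual set" where
  "gen_eigen c = {f. \<exists>m. shift_act ([:-c, 1:] ^ m) f = 0}"

lemma shift_act_power_mono:
  assumes "shift_act ([:-c, 1:] ^ a) f = 0" "a \<le> b"
  shows "shift_act ([:-c, 1:] ^ b) f = 0"
proof -
  have "[:-c, 1:] ^ b = [:-c, 1:] ^ (b - a) * [:-c, 1:] ^ a"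
    using assms(2) by (simp flip: power_add)
  then show ?thesis using assms(1) by (simp add: shift_act_mult)
qed

lemma zero_in_gen_eigen: "0 \<in> gen_eigen c"
  by (auto simp: gen_eigen_def)

lemma gen_eigen_common_power:
  assumes "f \<in> gen_eigen c" "g \<in> gen_eigen c"
  obtains m where "shift_act ([:-c, 1:] ^ m) f = 0" "shift_act ([:-c, 1:] ^ m) g = 0"
proof -
  obtain a b where "shift_act ([:-c, 1:] ^ a) f = 0" "shift_act ([:-c, 1:] ^ b) g = 0"
    using assms by (auto simp: gen_eigen_def)
  then have "shift_act ([:-c, 1:] ^ (a + b)) f = 0" "shift_act ([:-c, 1:] ^ (a + b)) g = 0"
    by (auto elim: shift_act_power_mono)
  then show thesis by (rule that)
qed

lemma gen_eigen_add:
  assumes "f \<in> gen_eigen c" "g \<in> gen_eigen c"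
  shows "f + g \<in> gen_eigen c"
proof -
  obtain m where "shift_act ([:-c, 1:] ^ m) f = 0" "shift_act ([:-c, 1:] ^ m) g = 0"
    using assms by (rule gen_eigen_common_power)
  then show ?thesis
    unfolding gen_eigen_def by (intro CollectI exI[of _ m]) (simp add: shift_act_add)
qed

lemma gen_eigen_diff:
  assumes "f \<in> gen_eigen c" "g \<in> gen_eigen c"
  shows "f - g \<in> gen_eigen c"
proof -
  obtain m where "shift_act ([:-c, 1:] ^ m) f = 0" "shift_act ([:-c, 1:] ^ m) g = 0"
    using assms by (rule gen_eigen_common_power)
  then show ?thesis
    unfolding gen_eigen_def by (intro CollectI exI[of _ m]) (simp add: shift_act_diff)
qed

lemma shift_act_power_conv:
  "a + b \<le> n \<Longrightarrow> shift_act ([:-c, 1:] ^ a) f = 0 \<Longrightarrow> shift_act ([:-d, 1:] ^ b) g = 0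
   \<Longrightarrow> shift_act ([:-(c + d), 1:] ^ n) (conv f g) = 0"
proof (induction n arbitrary: a b f g)
  case (Suc n)
  show ?case
  proof (cases "a = 0 \<or> b = 0")
    case True
    with Suc.prems show ?thesis by auto
  next
    case False
    then obtain a' b' where ab: "a = Suc a'" "b = Suc b'" by (meson not0_implies_Suc)
    have f': "shift_act ([:-c, 1:] ^ a') (shift_act [:-c, 1:] f) = 0"
      using Suc.prems(2) by (simp only: ab power_Suc2 shift_act_mult)
    have g': "shift_act ([:-d, 1:] ^ b') (shift_act [:-d, 1:] g) = 0"
      using Suc.prems(3) by (simp only: ab power_Suc2 shift_act_mult)
    have "shift_act ([:-(c + d), 1:] ^ Suc n) (conv f g)
        = shift_act ([:-(c + d), 1:] ^ n) (conv (shift_act [:-c, 1:] f) g)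
          + shift_act ([:-(c + d), 1:] ^ n) (conv f (shift_act [:-d, 1:] g))"
      by (simp only: power_Suc2 shift_act_mult shift_act_linear_conv shift_act_add)
    also have "\<dots> = 0"
      using Suc.IH[OF _ f' Suc.prems(3)] Suc.IH[OF _ Suc.prems(2) g'] Suc.prems(1) ab by simp
    finally show ?thesis .
  qed
qed simp

lemma conv_gen_eigen: "f \<in> gen_eigen c \<Longrightarrow> g \<in> gen_eigen d \<Longrightarrow> conv f g \<in> gen_eigen (c + d)"
  unfolding gen_eigen_def by (blast intro: shift_act_power_conv[OF order_refl])

lemma dual_app_eq_shift_act: "dual_app f q = shift_act q f 0"
  by (simp add: dual_app_def shift_act_def)

lemma linrec_iff: "f \<in> linrec \<longleftrightarrow> (\<exists>P. P \<noteq> 0 \<and> shift_act P f = 0)"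
proof
  assume "f \<in> linrec"
  then obtain K where K: "poly_ideal K" "K \<noteq> {0}" "\<forall>q\<in>K. dual_app f q = 0"
    by (auto simp: linrec_def)
  then obtain P where P: "P \<in> K" "P \<noteq> 0" by (auto simp: poly_ideal_def)
  have "shift_act P f n = 0" for n
  proof -
    have "[:0, 1:] ^ n * P \<in> K" using K(1) P(1) by (simp add: poly_ideal_def)
    then have "shift_act ([:0, 1:] ^ n * P) f 0 = 0" using K(3) by (simp add: dual_app_eq_shift_act)
    then show ?thesis by (simp add: shift_act_mult shift_act_X_power)
  qed
  then show "\<exists>P. P \<noteq> 0 \<and> shift_act P f = 0" using P(2) by (auto simp: fun_eq_iff)
next
  assume "\<exists>P. P \<noteq> 0 \<and> shift_act P f = 0"
  then obtain P where P: "P \<noteq> 0" "shift_act P f = 0" by blast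
  let ?K = "{q * P | q. True}"
  have "1 * P \<in> ?K" by blast
  then have "?K \<noteq> {0}" using P(1) by auto
  moreover have "poly_ideal ?K"
    unfolding poly_ideal_def
  proof (intro conjI ballI allI)
    show "0 \<in> ?K" by auto
    fix a b assume "a \<in> ?K" "b \<in> ?K"
    then obtain qa qb where "a = qa * P" "b = qb * P" by blast
    then show "a + b \<in> ?K" by (auto intro!: exI[of _ "qa + qb"] simp: distrib_right)
  next
    fix a q assume "a \<in> ?K"
    then obtain qa where "a = qa * P" by blast
    then show "q * a \<in> ?K" by (auto intro!: exI[of _ "q * qa"] simp: mult.assoc)
  qed
  moreover have "\<forall>q\<in>?K. dual_app f q = 0"
    using P(2) by (auto simp: dual_app_eq_shift_act shift_act_mult)
  ultimately show "f \<in> linrec" unfolding linrec_def by blast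
qed

lemma linrec_finite_support: "\<forall>k\<ge>M. f k = 0 \<Longrightarrow> f \<in> linrec"
  unfolding linrec_iff by (intro exI[of _ "[:0, 1:] ^ M"]) (simp add: shift_act_X_power fun_eq_iff)

lemma gen_eigen_subset_linrec: "gen_eigen c \<subseteq> linrec"
proof
  fix f assume "f \<in> gen_eigen c"
  then obtain m where "shift_act ([:-c, 1:] ^ m) f = 0" by (auto simp: gen_eigen_def)
  moreover have "[:-c, 1:] ^ m \<noteq> 0" by simp
  ultimately show "f \<in> linrec" unfolding linrec_iff by blast
qed

lemma linrec_add:
  assumes "f \<in> linrec" "g \<in> linrec"
  shows "f + g \<in> linrec"
proof -
  obtain P Q where PQ: "P \<noteq> 0" "shift_act P f = 0" "Q \<noteq> 0" "shift_act Q g = 0"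
    using assms by (auto simp: linrec_iff)
  then have "shift_act (P * Q) (f + g) = 0"
    by (simp add: shift_act_add shift_act_mult shift_act_commute[of P Q f])
  then show ?thesis unfolding linrec_iff using PQ by (intro exI[of _ "P * Q"]) simp
qed

lemma linrec_sum: "finite A \<Longrightarrow> (\<forall>i\<in>A. g i \<in> linrec) \<Longrightarrow> (\<Sum>i\<in>A. g i) \<in> linrec"
  by (induction A rule: finite_induct) (auto simp: linrec_add linrec_finite_support)

lemma linrec_annihilated_by_linear_powers:
  assumes "f \<in> linrec"
  obtains F N where "finite F" "shift_act (\<Prod>c\<in>F. [:-c, 1:] ^ N) f = 0"
proof -
  obtain P where P: "P \<noteq> 0" "shift_act P f = 0" using assms by (auto simp: linrec_iff)
  define F where "F = {x. poly P x = 0}"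
  have fin: "finite F" unfolding F_def using P(1) by (rule poly_roots_finite)
  have "\<forall>x. poly P x = 0 \<longrightarrow> poly (\<Prod>c\<in>F. [:-c, 1:]) x = 0"
    using fin by (auto simp: poly_prod F_def prod_zero_iff)
  then have "P dvd (\<Prod>c\<in>F. [:-c, 1:]) ^ degree P" using P(1) nullstellensatz_univariate by blast
  then have "P dvd (\<Prod>c\<in>F. [:-c, 1:] ^ degree P)" by (simp add: prod_power_distrib)
  then show thesis using that fin shift_act_dvd P(2) by blast
qed

lemma bezout_linear_power:
  fixes B :: "'a::field_gcd poly"
  assumes "poly B c \<noteq> 0"
  obtains u v where "u * [:-c, 1:] ^ m + v * B = 1"
proof -
  have "prime_elem [:-c, 1:]" by (rule prime_elem_linear_field_poly) simp
  moreover have "\<not> [:-c, 1:] dvd B" using assms by (simp add: poly_eq_0_iff_dvd)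
  ultimately have "coprime [:-c, 1:] B" by (rule prime_elem_imp_coprime)
  then have "gcd ([:-c, 1:] ^ m) B = 1" by simp
  then show thesis using bezout_coefficients_fst_snd that by metis
qed

lemma poly_prod_linear_powers_nonzero:
  fixes c :: complex
  assumes "finite F" "c \<notin> F"
  shows "poly (\<Prod>d\<in>F. [:-d, 1:] ^ N) c \<noteq> 0"
proof -
  have "poly [:-d, 1:] c \<noteq> 0" if "d \<in> F" for d
    using that assms(2) by auto
  then show ?thesis using assms(1) by (simp add: poly_prod)
qed

section \<open>Primary decomposition\<close>

definition eigen_decomp :: "dual \<Rightarrow> complex set \<Rightarrow> (complex \<Rightarrow> dual) \<Rightarrow> bool" where
  "eigen_decomp f H g \<longleftrightarrow>
     finite H \<and> (\<forall>c. g c \<in> gen_eigen c) \<and> (\<forall>c. c \<notin> H \<longrightarrow> g c = 0) \<and> f = (\<Sum>c\<in>H. g c)"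

lemma gen_eigen_decomp_if_annihilated:
  "finite F \<Longrightarrow> shift_act (\<Prod>c\<in>F. [:-c, 1:] ^ N) f = 0
   \<Longrightarrow> \<exists>g. (\<forall>c\<in>F. g c \<in> gen_eigen c) \<and> f = (\<Sum>c\<in>F. g c)"
proof (induction F arbitrary: f rule: finite_induct)
  case (insert c F)
  define A where "A = [:-c, 1:] ^ N"
  define B where "B = (\<Prod>d\<in>F. [:-d, 1:] ^ N)"
  have AB: "shift_act (A * B) f = 0" using insert by (simp add: A_def B_def)
  have "poly B c \<noteq> 0" unfolding B_def using insert(1,2) by (rule poly_prod_linear_powers_nonzero)
  then obtain u v where uv: "u * A + v * B = 1" unfolding A_def by (rule bezout_linear_power)
  define fc where "fc = shift_act (v * B) f"
  have "shift_act A fc = shift_act v (shift_act (A * B) f)"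
    by (simp add: fc_def ac_simps flip: shift_act_mult)
  then have fc: "fc \<in> gen_eigen c" using AB unfolding gen_eigen_def A_def by auto
  have "shift_act B (shift_act (u * A) f) = shift_act u (shift_act (A * B) f)"
    by (simp add: ac_simps flip: shift_act_mult)
  then obtain g where g: "\<forall>d\<in>F. g d \<in> gen_eigen d" "shift_act (u * A) f = (\<Sum>d\<in>F. g d)"
    using insert.IH AB unfolding B_def by auto
  have "(\<Sum>d\<in>F. (g(c := fc)) d) = (\<Sum>d\<in>F. g d)"
    using insert(2) by (intro sum.cong) auto
  moreover have "f = shift_act (u * A + v * B) f" by (simp add: uv)
  ultimately have "f = (\<Sum>d\<in>insert c F. (g(c := fc)) d)"
    using insert(1,2) g(2) by (simp add: shift_act_add_poly fc_def add.commute)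
  moreover have "\<forall>d\<in>insert c F. (g(c := fc)) d \<in> gen_eigen d" using g(1) fc by auto
  ultimately show ?case by blast
qed simp

lemma linrec_eigen_decomp:
  assumes "f \<in> linrec"
  obtains H g where "eigen_decomp f H g"
proof -
  obtain F N where F: "finite F" "shift_act (\<Prod>c\<in>F. [:-c, 1:] ^ N) f = 0"
    using assms by (rule linrec_annihilated_by_linear_powers)
  then obtain g where g: "\<forall>c\<in>F. g c \<in> gen_eigen c" "f = (\<Sum>c\<in>F. g c)"
    using gen_eigen_decomp_if_annihilated by blast
  have "eigen_decomp f F (\<lambda>c. if c \<in> F then g c else 0)"
    using F(1) g by (auto simp: eigen_decomp_def zero_in_gen_eigen)
  then show thesis by (rule that)
qed

text \<open>Independence of generalised eigenspaces: annihilate all other summands by a product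
coprime to \<open>(S - c)\<^sup>M\<close>.\<close>

lemma gen_eigen_sum_eq_0:
  assumes fin: "finite F" and g: "\<forall>d\<in>F. g d \<in> gen_eigen d" and sum: "(\<Sum>d\<in>F. g d) = 0"
    and c: "c \<in> F"
  shows "g c = 0"
proof -
  have "\<forall>d\<in>F. \<exists>m. shift_act ([:-d, 1:] ^ m) (g d) = 0"
    using g by (simp add: gen_eigen_def)
  then obtain m where m: "\<forall>d\<in>F. shift_act ([:-d, 1:] ^ m d) (g d) = 0"
    by (rule bchoice[elim_format]) blast
  define M where "M = (\<Sum>d\<in>F. m d)"
  have M: "shift_act ([:-d, 1:] ^ M) (g d) = 0" if "d \<in> F" for d
  proof (rule shift_act_power_mono)
    show "shift_act ([:-d, 1:] ^ m d) (g d) = 0" using m that by blast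
    show "m d \<le> M" unfolding M_def using fin that by (simp add: member_le_sum)
  qed
  define B where "B = (\<Prod>d\<in>F - {c}. [:-d, 1:] ^ M)"
  have others: "shift_act B (g d) = 0" if "d \<in> F - {c}" for d
  proof -
    have "B = (\<Prod>e\<in>F - {c} - {d}. [:-e, 1:] ^ M) * [:-d, 1:] ^ M"
      unfolding B_def using that fin by (simp add: prod.remove mult.commute)
    then show ?thesis using M that by (simp add: shift_act_mult)
  qed
  have "shift_act B (\<Sum>d\<in>F. g d) = shift_act B (g c) + (\<Sum>d\<in>F - {c}. shift_act B (g d))"
    using fin c by (simp add: sum.remove shift_act_add shift_act_sum)
  then have gB: "shift_act B (g c) = 0" using sum others by simp
  have "poly B c \<noteq> 0" unfolding B_def using fin by (intro poly_prod_linear_powers_nonzero) auto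
  then obtain u v where uv: "u * [:-c, 1:] ^ M + v * B = 1" by (rule bezout_linear_power)
  have "g c = shift_act (u * [:-c, 1:] ^ M + v * B) (g c)" by (simp add: uv)
  also have "\<dots> = 0" using gB M c by (simp add: shift_act_add_poly shift_act_mult)
  finally show ?thesis .
qed

lemma eigen_decomp_superset:
  assumes "eigen_decomp f H g" "H \<subseteq> K" "finite K"
  shows "eigen_decomp f K g"
  using assms unfolding eigen_decomp_def by (auto intro!: sum.mono_neutral_left)

lemma eigen_decomp_unique:
  assumes "eigen_decomp f H g" "eigen_decomp f H' g'"
  shows "g = g'"
proof
  fix c
  let ?K = "H \<union> H'"
  have fin: "finite ?K" using assms by (simp add: eigen_decomp_def)
  then have K: "eigen_decomp f ?K g" "eigen_decomp f ?K g'"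
    using assms by (auto intro: eigen_decomp_superset)
  then have sum: "(\<Sum>d\<in>?K. g d - g' d) = 0"
    by (simp add: eigen_decomp_def sum_subtractf)
  have diff: "\<forall>d\<in>?K. g d - g' d \<in> gen_eigen d"
    using assms unfolding eigen_decomp_def by (blast intro: gen_eigen_diff)
  show "g c = g' c"
  proof (cases "c \<in> ?K")
    case True
    then show ?thesis using gen_eigen_sum_eq_0[OF fin diff sum] by simp
  next
    case False
    then show ?thesis using assms by (simp add: eigen_decomp_def)
  qed
qed

section \<open>A derivation of the linearly recursive sequences at the counit\<close>

text \<open>If \<open>egf f = \<Sum> p\<^sub>c(z) e\<^sup>c\<^sup>z\<close> then \<open>spec_der f = \<Sum> c p\<^sub>c(0)\<close>. The choice made by \<open>SOME\<close> is
irrelevant by \<open>eigen_decomp_unique\<close>.\<close>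

definition spec_der :: "dual \<Rightarrow> complex" where
  "spec_der f = (SOME v. \<exists>H g. eigen_decomp f H g \<and> v = (\<Sum>c\<in>H. c * g c 0))"

lemma spec_der_eq:
  assumes "eigen_decomp f H g"
  shows "spec_der f = (\<Sum>c\<in>H. c * g c 0)"
proof -
  have "\<exists>v H g. eigen_decomp f H g \<and> v = (\<Sum>c\<in>H. c * g c 0)" using assms by blast
  then have "\<exists>H' g'. eigen_decomp f H' g' \<and> spec_der f = (\<Sum>c\<in>H'. c * g' c 0)"
    unfolding spec_der_def by (rule someI_ex)
  then obtain H' g' where H': "eigen_decomp f H' g'" "spec_der f = (\<Sum>c\<in>H'. c * g' c 0)"
    by blast
  have "g' = g" using H'(1) assms by (rule eigen_decomp_unique)
  have "(\<Sum>c\<in>K. c * g c 0) = (\<Sum>c\<in>H \<union> H'. c * g c 0)" if "K = H \<or> K = H'" for K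
    using that assms H'(1) \<open>g' = g\<close> unfolding eigen_decomp_def
    by (intro sum.mono_neutral_left) auto
  then show ?thesis using H'(2) \<open>g' = g\<close> by metis
qed

lemma spec_der_gen_eigen: "f \<in> gen_eigen c \<Longrightarrow> spec_der f = c * f 0"
  by (subst spec_der_eq[of f "{c}" "\<lambda>d. if d = c then f else 0"])
    (auto simp: eigen_decomp_def zero_in_gen_eigen)

lemma spec_der_add:
  assumes "f \<in> linrec" "g \<in> linrec"
  shows "spec_der (f + g) = spec_der f + spec_der g"
proof -
  obtain F a G b where "eigen_decomp f F a" "eigen_decomp g G b"
    using assms by (meson linrec_eigen_decomp)
  moreover have "finite (F \<union> G)" using calculation by (simp add: eigen_decomp_def)
  ultimately have a: "eigen_decomp f (F \<union> G) a" and b: "eigen_decomp g (F \<union> G) b"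
    by (auto intro: eigen_decomp_superset)
  then have "eigen_decomp (f + g) (F \<union> G) (\<lambda>c. a c + b c)"
    unfolding eigen_decomp_def by (auto intro: gen_eigen_add simp: sum.distrib)
  then show ?thesis
    by (simp add: spec_der_eq spec_der_eq[OF a] spec_der_eq[OF b] distrib_left sum.distrib)
qed

lemma spec_der_sum:
  "finite A \<Longrightarrow> (\<forall>i\<in>A. h i \<in> linrec) \<Longrightarrow> spec_der (\<Sum>i\<in>A. h i) = (\<Sum>i\<in>A. spec_der (h i))"
proof (induction A rule: finite_induct)
  case empty
  have "eigen_decomp 0 {} (\<lambda>_. 0)" by (simp add: eigen_decomp_def zero_in_gen_eigen)
  then show ?case by (simp add: spec_der_eq)
next
  case (insert x A)
  then have "spec_der (h x + (\<Sum>i\<in>A. h i)) = spec_der (h x) + spec_der (\<Sum>i\<in>A. h i)"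
    by (simp add: spec_der_add linrec_sum del: plus_fun_apply)
  with insert show ?case by (simp del: plus_fun_apply)
qed

lemma conv_eigen_decomp:
  assumes "eigen_decomp f F a" "eigen_decomp g G b"
  shows "conv f g = (\<Sum>c\<in>F. \<Sum>d\<in>G. conv (a c) (b d))"
proof -
  have F: "finite F" "f = (\<Sum>c\<in>F. a c)" and G: "finite G" "g = (\<Sum>d\<in>G. b d)"
    using assms by (simp_all add: eigen_decomp_def)
  have "conv f g = (\<Sum>c\<in>F. conv (a c) g)"
    by (simp only: F(2) conv_sum_left[OF F(1)])
  also have "\<dots> = (\<Sum>c\<in>F. \<Sum>d\<in>G. conv (a c) (b d))"
    by (simp only: G(2) conv_sum_right[OF G(1)])
  finally show ?thesis .
qed

lemma linrec_conv:
  assumes "f \<in> linrec" "g \<in> linrec"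
  shows "conv f g \<in> linrec"
proof -
  obtain F a G b where fa: "eigen_decomp f F a" and gb: "eigen_decomp g G b"
    using assms by (meson linrec_eigen_decomp)
  then have "conv (a c) (b d) \<in> linrec" for c d
    using gen_eigen_subset_linrec conv_gen_eigen unfolding eigen_decomp_def by blast
  then show ?thesis
    using fa gb unfolding conv_eigen_decomp[OF fa gb] eigen_decomp_def
    by (simp add: linrec_sum)
qed

theorem spec_der_conv:
  assumes "f \<in> linrec" "g \<in> linrec"
  shows "spec_der (conv f g) = spec_der f * g 0 + f 0 * spec_der g"
proof -
  obtain F a G b where fa: "eigen_decomp f F a" and gb: "eigen_decomp g G b"
    using assms by (meson linrec_eigen_decomp)
  then have fin: "finite F" "finite G" and ab: "\<forall>c. a c \<in> gen_eigen c" "\<forall>d. b d \<in> gen_eigen d"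
    by (simp_all add: eigen_decomp_def)
  then have ab_conv: "conv (a c) (b d) \<in> gen_eigen (c + d)" for c d
    by (simp add: conv_gen_eigen)
  then have ab_linrec: "conv (a c) (b d) \<in> linrec" for c d
    using gen_eigen_subset_linrec by blast
  have "spec_der (conv f g) = (\<Sum>c\<in>F. \<Sum>d\<in>G. spec_der (conv (a c) (b d)))"
    using fin ab_linrec
    by (simp add: conv_eigen_decomp[OF fa gb] spec_der_sum linrec_sum)
  also have "\<dots> = (\<Sum>c\<in>F. \<Sum>d\<in>G. c * a c 0 * b d 0 + a c 0 * (d * b d 0))"
    by (simp add: spec_der_gen_eigen[OF ab_conv] conv_at_0 algebra_simps)
  also have "\<dots> = (\<Sum>c\<in>F. c * a c 0) * (\<Sum>d\<in>G. b d 0) + (\<Sum>c\<in>F. a c 0) * (\<Sum>d\<in>G. d * b d 0)"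
    by (simp add: sum.distrib sum_product)
  also have "\<dots> = spec_der f * g 0 + f 0 * spec_der g"
    using fa gb unfolding spec_der_eq[OF fa] spec_der_eq[OF gb]
    by (simp add: eigen_decomp_def sum_fun_apply)
  finally show ?thesis .
qed

section \<open>Powers of the augmentation ideals\<close>

lemma prods_mono: "K \<subseteq> K' \<Longrightarrow> prods K n \<subseteq> prods K' n"
  by (induction n) auto

lemma cpow_in_prods: "x \<in> K \<Longrightarrow> cpow x n \<in> prods K n"
  by (induction n) auto

lemma prods_subset_linrec: "K \<subseteq> linrec \<Longrightarrow> prods K n \<subseteq> linrec"
proof (induction n)
  case 0
  have "eps \<in> linrec" by (rule linrec_finite_support[of 1]) (simp add: eps_def)
  then show ?case by simp
next
  case (Suc n)
  then show ?case by (auto intro!: linrec_conv)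
qed

lemma conv_vanish_below:
  assumes "a 0 = 0" "\<forall>k<N. b k = 0"
  shows "\<forall>k<Suc N. conv a b k = 0"
  unfolding conv_def
proof (intro allI impI sum.neutral ballI)
  fix k j assume "k < Suc N" "j \<in> {..k}"
  then show "of_nat (k choose j) * a j * b (k - j) = 0"
    using assms by (cases "j = 0") auto
qed

lemma prods_vanish_below: "K \<subseteq> augI \<Longrightarrow> p \<in> prods K n \<Longrightarrow> \<forall>k<n. p k = 0"
proof (induction n arbitrary: p)
  case (Suc n)
  then obtain a b where ab: "a \<in> K" "b \<in> prods K n" "p = conv a b" by auto
  then have "a 0 = 0" using Suc.prems(1) by (auto simp: augI_def)
  moreover have "\<forall>k<n. b k = 0" using Suc.IH Suc.prems(1) ab(2) by blast
  ultimately show ?case unfolding ab(3) by (rule conv_vanish_below)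
qed simp

lemma ideal_powI:
  fixes F :: "nat set"
  shows "finite F \<Longrightarrow> \<forall>i\<in>F. a i \<in> A \<and> p i \<in> prods K n
   \<Longrightarrow> (\<Sum>i\<in>F. conv (a i) (p i)) \<in> ideal_pow A K n"
  unfolding ideal_pow_def by blast

lemma ideal_powE:
  assumes "x \<in> ideal_pow A K n"
  obtains F :: "nat set" and a p where "finite F" "\<forall>i\<in>F. a i \<in> A \<and> p i \<in> prods K n"
    "x = (\<Sum>i\<in>F. conv (a i) (p i))"
  using assms unfolding ideal_pow_def mem_Collect_eq by (elim exE conjE) (rule that)

lemma conv_in_ideal_pow: "a \<in> A \<Longrightarrow> p \<in> prods K n \<Longrightarrow> conv a p \<in> ideal_pow A K n"
  using ideal_powI[of "{0::nat}" "\<lambda>_. a" A "\<lambda>_. p"] by simp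

lemma ideal_pow_mono:
  assumes "A \<subseteq> A'" "K \<subseteq> K'"
  shows "ideal_pow A K n \<subseteq> ideal_pow A' K' n"
proof
  fix x assume "x \<in> ideal_pow A K n"
  then obtain F :: "nat set" and a p where F: "finite F" "\<forall>i\<in>F. a i \<in> A \<and> p i \<in> prods K n"
    and x: "x = (\<Sum>i\<in>F. conv (a i) (p i))"
    by (rule ideal_powE)
  have "\<forall>i\<in>F. a i \<in> A' \<and> p i \<in> prods K' n"
    using F(2) assms prods_mono[OF assms(2), of n] by blast
  then show "x \<in> ideal_pow A' K' n" unfolding x by (rule ideal_powI[OF F(1)])
qed

lemma ideal_pow_Suc_subset:
  assumes "\<forall>a\<in>A. \<forall>k\<in>K. conv a k \<in> A"
  shows "ideal_pow A K (Suc n) \<subseteq> ideal_pow A K n"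
proof
  fix x assume "x \<in> ideal_pow A K (Suc n)"
  then obtain F :: "nat set" and a p where F: "finite F" "\<forall>i\<in>F. a i \<in> A \<and> p i \<in> prods K (Suc n)"
    and x: "x = (\<Sum>i\<in>F. conv (a i) (p i))"
    by (rule ideal_powE)
  then have "\<forall>i\<in>F. \<exists>k q. k \<in> K \<and> q \<in> prods K n \<and> p i = conv k q"
    by fastforce
  then obtain k q where kq: "\<forall>i\<in>F. k i \<in> K \<and> q i \<in> prods K n \<and> p i = conv (k i) (q i)"
    by metis
  have "x = (\<Sum>i\<in>F. conv (conv (a i) (k i)) (q i))"
    unfolding x using kq by (intro sum.cong refl) (simp add: conv_assoc)
  also have "\<dots> \<in> ideal_pow A K n"
    using kq F assms by (intro ideal_powI) auto
  finally show "x \<in> ideal_pow A K n" .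
qed

lemma ideal_pow_antimono:
  "\<forall>a\<in>A. \<forall>k\<in>K. conv a k \<in> A \<Longrightarrow> antimono (ideal_pow A K)"
  unfolding antimono_iff_le_Suc by (simp add: ideal_pow_Suc_subset)

lemma Ipow_iff: "f \<in> Ipow N \<longleftrightarrow> (\<forall>k<N. f k = 0)"
proof
  assume "f \<in> Ipow N"
  then obtain F :: "nat set" and a p where "finite F" "\<forall>i\<in>F. a i \<in> UNIV \<and> p i \<in> prods augI N"
    and f: "f = (\<Sum>i\<in>F. conv (a i) (p i))"
    unfolding Ipow_def by (rule ideal_powE)
  then have "\<forall>i\<in>F. \<forall>k<N. p i k = 0" by (blast dest: prods_vanish_below[OF order_refl])
  then show "\<forall>k<N. f k = 0" unfolding f sum_fun_apply conv_def by simp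
next
  assume "\<forall>k<N. f k = 0"
  then have f: "f = conv (dual_of_egf (fps_shift N (egf f))) (cpow xi N)"
    by (rule conv_xi_power_factor)
  have "conv (dual_of_egf (fps_shift N (egf f))) (cpow xi N) \<in> Ipow N"
    unfolding Ipow_def by (intro conv_in_ideal_pow cpow_in_prods) (simp_all add: augI_def xi_def)
  then show "f \<in> Ipow N" by (rule ssubst[OF f])
qed

lemma Jpow_if_finite_support:
  assumes "\<forall>k<N. f k = 0" "\<forall>k\<ge>M. f k = 0"
  shows "f \<in> Jpow N"
proof -
  have "dual_of_egf (fps_shift N (egf f)) \<in> linrec"
    by (rule linrec_finite_support[of M]) (simp add: dual_of_egf_def assms(2))
  moreover have "xi \<in> augJ"
    by (simp add: augJ_def augI_def xi_def linrec_finite_support[of 2])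
  ultimately have "conv (dual_of_egf (fps_shift N (egf f))) (cpow xi N) \<in> Jpow N"
    unfolding Jpow_def by (intro conv_in_ideal_pow cpow_in_prods)
  then show ?thesis by (rule ssubst[OF conv_xi_power_factor[OF assms(1)]])
qed

lemma Jpow_subset_linrec: "Jpow n \<subseteq> linrec"
proof
  fix x assume "x \<in> Jpow n"
  then obtain F :: "nat set" and a p where "finite F" "\<forall>i\<in>F. a i \<in> linrec \<and> p i \<in> prods augJ n"
    and "x = (\<Sum>i\<in>F. conv (a i) (p i))"
    unfolding Jpow_def by (rule ideal_powE)
  moreover have "prods augJ n \<subseteq> linrec" by (rule prods_subset_linrec) (simp add: augJ_def)
  ultimately show "x \<in> linrec" by (auto intro!: linrec_sum linrec_conv)
qed

lemma Jpow_subset_Ipow: "Jpow n \<subseteq> Ipow n"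
  unfolding Jpow_def Ipow_def by (rule ideal_pow_mono) (auto simp: augJ_def)

lemma antimono_Jpow: "antimono Jpow"
  unfolding Jpow_def fun_eq_iff[symmetric]
  by (rule ideal_pow_antimono) (auto simp: augJ_def intro: linrec_conv)

lemma antimono_Ipow: "antimono Ipow"
  by (auto simp: antimono_def Ipow_iff)

text \<open>The derivation kills \<open>J\<^sup>2\<close> because products of two elements of \<open>J\<close> have value and
derivative \<open>0\<close>.\<close>

lemma spec_der_Jpow2: "x \<in> Jpow 2 \<Longrightarrow> spec_der x = 0"
proof -
  assume "x \<in> Jpow 2"
  then obtain F :: "nat set" and a p where F: "finite F" "\<forall>i\<in>F. a i \<in> linrec \<and> p i \<in> prods augJ 2"
    and x: "x = (\<Sum>i\<in>F. conv (a i) (p i))"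
    unfolding Jpow_def by (rule ideal_powE)
  have "spec_der (conv (a i) (p i)) = 0 \<and> conv (a i) (p i) \<in> linrec" if i: "i \<in> F" for i
  proof -
    obtain q r where qr: "q \<in> augJ" "r \<in> augJ" "p i = conv q r"
      using F(2) i by (auto simp: numeral_2_eq_2)
    then have "q \<in> linrec" "r \<in> linrec" "q 0 = 0" "r 0 = 0"
      by (auto simp: augJ_def augI_def)
    then show ?thesis using F(2) i qr(3)
      by (simp add: spec_der_conv linrec_conv conv_at_0)
  qed
  then show ?thesis using F(1) by (simp add: x spec_der_sum)
qed

section \<open>Truncation splits the comparison map\<close>

definition trunc_section :: "(nat \<Rightarrow> dual) \<Rightarrow> nat \<Rightarrow> dual" where
  "trunc_section b n = (\<lambda>m. if m \<le> n then b n m else 0)"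

lemma conv_eq_upto:
  "\<forall>j\<le>k. f j = f' j \<Longrightarrow> \<forall>j\<le>k. g j = g' j \<Longrightarrow> conv f g k = conv f' g' k"
  unfolding conv_def by (intro sum.cong refl) auto

lemma conv_vanish_above:
  assumes "\<forall>j>M. f j = 0" "\<forall>j>M. g j = 0" "k > 2 * M"
  shows "conv f g k = 0"
  unfolding conv_def
proof (intro sum.neutral ballI)
  fix j assume "j \<in> {..k}"
  then show "of_nat (k choose j) * f j * g (k - j) = 0"
    using assms by (cases "j > M") auto
qed

lemma trunc_section_in_inv_lim:
  assumes "b \<in> inv_lim UNIV Ipow"
  shows "trunc_section b \<in> inv_lim linrec Jpow"
proof -
  have "trunc_section b (Suc n) - trunc_section b n \<in> Jpow (Suc n)" for n
  proof (rule Jpow_if_finite_support[where M = "Suc (Suc n)"])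
    have "b (Suc n) - b n \<in> Ipow (Suc n)" using assms by (simp add: inv_lim_def)
    then show "\<forall>k<Suc n. (trunc_section b (Suc n) - trunc_section b n) k = 0"
      by (simp add: Ipow_iff trunc_section_def)
  qed (simp add: trunc_section_def)
  moreover have "trunc_section b n \<in> linrec" for n
    by (rule linrec_finite_support[of "Suc n"]) (simp add: trunc_section_def)
  ultimately show ?thesis by (simp add: inv_lim_def)
qed

lemma lim_eq_trunc_section:
  assumes "lim_eq Ipow b b'"
  shows "lim_eq Jpow (trunc_section b) (trunc_section b')"
  unfolding lim_eq_def
proof
  fix n
  show "trunc_section b n - trunc_section b' n \<in> Jpow (Suc n)"
  proof (rule Jpow_if_finite_support[where M = "Suc n"])
    have "b n - b' n \<in> Ipow (Suc n)" using assms by (simp add: lim_eq_def)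
    then show "\<forall>k<Suc n. (trunc_section b n - trunc_section b' n) k = 0"
      by (simp add: Ipow_iff trunc_section_def)
  qed (simp add: trunc_section_def)
qed

lemma lim_eq_Ipow_trunc_section: "lim_eq Ipow (trunc_section b) b"
  by (simp add: lim_eq_def Ipow_iff trunc_section_def)

lemma trunc_section_add:
  "lim_eq Jpow (trunc_section (\<lambda>n. b n + b' n)) (\<lambda>n. trunc_section b n + trunc_section b' n)"
  unfolding lim_eq_def
  by (intro allI Jpow_if_finite_support[where M = 0]) (simp_all add: trunc_section_def)

lemma trunc_section_cmult:
  "lim_eq Jpow (trunc_section (\<lambda>n m. c * b n m)) (\<lambda>n m. c * trunc_section b n m)"
  unfolding lim_eq_def
  by (intro allI Jpow_if_finite_support[where M = 0]) (simp_all add: trunc_section_def)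

lemma trunc_section_eps: "lim_eq Jpow (trunc_section (\<lambda>n. eps)) (\<lambda>n. eps)"
  unfolding lim_eq_def
  by (intro allI Jpow_if_finite_support[where M = 0]) (simp_all add: trunc_section_def eps_def)

lemma trunc_section_conv:
  "lim_eq Jpow (trunc_section (\<lambda>n. conv (b n) (b' n)))
     (\<lambda>n. conv (trunc_section b n) (trunc_section b' n))"
  unfolding lim_eq_def
proof
  fix n
  let ?d = "trunc_section (\<lambda>n. conv (b n) (b' n)) n - conv (trunc_section b n) (trunc_section b' n)"
  show "?d \<in> Jpow (Suc n)"
  proof (rule Jpow_if_finite_support[where M = "Suc (2 * n)"])
    have "conv (trunc_section b n) (trunc_section b' n) k = conv (b n) (b' n) k" if "k \<le> n" for k
      using that by (intro conv_eq_upto) (auto simp: trunc_section_def)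
    then show "\<forall>k<Suc n. ?d k = 0" by (simp add: trunc_section_def)
    have "conv (trunc_section b n) (trunc_section b' n) k = 0" if "k > 2 * n" for k
      using that by (intro conv_vanish_above[where M = n]) (auto simp: trunc_section_def)
    then show "\<forall>k\<ge>Suc (2 * n). ?d k = 0" by (simp add: trunc_section_def)
  qed
qed

section \<open>A non-zero element of the kernel\<close>

definition tail_ones :: "nat \<Rightarrow> dual" where
  "tail_ones n = (\<lambda>m. if m \<le> n then 0 else 1)"

lemma kernel_witness_eq_tail_ones:
  "(\<lambda>n. phi1 - (\<Sum>k\<le>n. (\<lambda>m. (1 / fact k) * cpow xi k m))) = tail_ones"
proof (intro ext)
  fix n m
  have "(\<Sum>k\<le>n. (\<lambda>m. (1 / fact k) * cpow xi k m)) m = (\<Sum>k\<le>n. if k = m then 1 else 0)"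
    unfolding sum_fun_apply by (intro sum.cong refl) (simp add: cpow_xi)
  then show "(phi1 - (\<Sum>k\<le>n. (\<lambda>m. (1 / fact k) * cpow xi k m))) m = tail_ones n m"
    by (simp add: phi1_def tail_ones_def)
qed

text \<open>\<open>tail_ones n\<close> is \<open>\<phi>\<^sub>1\<close>, an eigenvector for the eigenvalue \<open>1\<close>, minus a finitely
supported sequence, which is a generalised eigenvector for \<open>0\<close>.\<close>

lemma eigen_decomp_tail_ones:
  fixes n :: nat
  defines "g \<equiv> \<lambda>c. if c = 1 then phi1 else if c = 0 then (\<lambda>m. if m \<le> n then -1 else 0) else 0"
  shows "eigen_decomp (tail_ones n) {0, 1} g"
proof -
  have "shift_act [:-1, 1:] phi1 = 0" by (simp add: shift_act_linear phi1_def fun_eq_iff)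
  then have "g 1 \<in> gen_eigen 1"
    unfolding gen_eigen_def g_def by (intro CollectI exI[of _ 1]) simp
  moreover have "shift_act ([:0, 1:] ^ Suc n) (g 0) = 0"
    unfolding shift_act_X_power by (simp add: g_def fun_eq_iff)
  then have "g 0 \<in> gen_eigen 0" unfolding gen_eigen_def minus_zero by blast
  ultimately have "g c \<in> gen_eigen c" for c
    by (cases "c = 0 \<or> c = 1") (auto simp: g_def zero_in_gen_eigen)
  moreover have "tail_ones n = g 0 + g 1"
    by (simp add: g_def tail_ones_def phi1_def fun_eq_iff)
  ultimately show ?thesis by (simp add: eigen_decomp_def g_def add.commute)
qed

lemma eigen_decomp_linrec: "eigen_decomp f H g \<Longrightarrow> f \<in> linrec"
  unfolding eigen_decomp_def using gen_eigen_subset_linrec by (auto intro!: linrec_sum)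

lemma tail_ones_in_linrec: "tail_ones n \<in> linrec"
  by (rule eigen_decomp_linrec[OF eigen_decomp_tail_ones])

lemma spec_der_tail_ones: "spec_der (tail_ones n) = 1"
  by (simp add: spec_der_eq[OF eigen_decomp_tail_ones] phi1_def)

lemma tail_ones_not_in_Jpow2: "tail_ones n \<notin> Jpow 2"
  using spec_der_Jpow2 spec_der_tail_ones by fastforce

lemma tail_ones_in_Ipow: "tail_ones n \<in> Ipow (Suc n)"
  by (simp add: Ipow_iff tail_ones_def)

lemma tail_ones_in_inv_lim: "tail_ones \<in> inv_lim linrec Jpow"
proof -
  have "tail_ones (Suc n) - tail_ones n \<in> Jpow (Suc n)" for n
    by (rule Jpow_if_finite_support[where M = "Suc (Suc n)"]) (simp_all add: tail_ones_def)
  then show ?thesis by (simp add: inv_lim_def tail_ones_in_linrec)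
qed

lemma lim_eq_Ipow_tail_ones: "lim_eq Ipow tail_ones (\<lambda>n. 0)"
  by (simp add: lim_eq_def tail_ones_in_Ipow)

lemma not_lim_eq_Jpow_tail_ones: "\<not> lim_eq Jpow tail_ones (\<lambda>n. 0)"
  using tail_ones_not_in_Jpow2[of 1] by (auto simp: lim_eq_def numeral_2_eq_2)

section \<open>Adic topologies\<close>

lemma istopology_adic:
  fixes S :: "dual set" and P :: "nat \<Rightarrow> dual set"
  assumes "antimono P"
  shows "istopology (\<lambda>U. U \<subseteq> S \<and> (\<forall>x\<in>U. \<exists>n. \<forall>y\<in>P n. x + y \<in> U))"
  unfolding istopology_def
proof (rule conjI; intro allI impI)
  fix U V :: "dual set"
  assume U: "U \<subseteq> S \<and> (\<forall>x\<in>U. \<exists>n. \<forall>y\<in>P n. x + y \<in> U)"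
    and V: "V \<subseteq> S \<and> (\<forall>x\<in>V. \<exists>n. \<forall>y\<in>P n. x + y \<in> V)"
  show "U \<inter> V \<subseteq> S \<and> (\<forall>x\<in>U \<inter> V. \<exists>n. \<forall>y\<in>P n. x + y \<in> U \<inter> V)"
  proof (intro conjI ballI)
    show "U \<inter> V \<subseteq> S" using U by blast
    fix x assume x: "x \<in> U \<inter> V"
    obtain m where m: "\<forall>y\<in>P m. x + y \<in> U" using U x by blast
    obtain n where n: "\<forall>y\<in>P n. x + y \<in> V" using V x by blast
    have "P (max m n) \<subseteq> P m" by (rule antimonoD[OF assms]) simp
    moreover have "P (max m n) \<subseteq> P n" by (rule antimonoD[OF assms]) simp
    ultimately have "\<forall>y\<in>P (max m n). x + y \<in> U \<inter> V" using m n by blast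
    then show "\<exists>n. \<forall>y\<in>P n. x + y \<in> U \<inter> V" ..
  qed
next
  fix \<U> :: "dual set set"
  assume \<U>: "\<forall>U\<in>\<U>. U \<subseteq> S \<and> (\<forall>x\<in>U. \<exists>n. \<forall>y\<in>P n. x + y \<in> U)"
  show "\<Union>\<U> \<subseteq> S \<and> (\<forall>x\<in>\<Union>\<U>. \<exists>n. \<forall>y\<in>P n. x + y \<in> \<Union>\<U>)"
  proof (intro conjI ballI)
    show "\<Union>\<U> \<subseteq> S" using \<U> by blast
    fix x assume "x \<in> \<Union>\<U>"
    then obtain U where U: "U \<in> \<U>" "x \<in> U" by blast
    then obtain n where "\<forall>y\<in>P n. x + y \<in> U" using \<U> by blast
    then show "\<exists>n. \<forall>y\<in>P n. x + y \<in> \<Union>\<U>" using U by blast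
  qed
qed

lemma openin_adic_topology:
  "antimono P \<Longrightarrow>
   openin (adic_topology S P) U \<longleftrightarrow> U \<subseteq> S \<and> (\<forall>x\<in>U. \<exists>n. \<forall>y\<in>P n. x + y \<in> U)"
  unfolding adic_topology_def by (simp only: topology_inverse'[OF istopology_adic])

lemma openin_adic_if_openin_subtopology:
  assumes P: "antimono P" and Q: "antimono Q" and QP: "\<And>n. Q n \<subseteq> P n"
    and stable: "\<And>n x y. x \<in> S \<Longrightarrow> y \<in> Q n \<Longrightarrow> x + y \<in> S"
    and "openin (subtopology (adic_topology UNIV P) S) U"
  shows "openin (adic_topology S Q) U"
proof -
  obtain T where T: "openin (adic_topology UNIV P) T" "U = T \<inter> S"
    using assms(5) unfolding openin_subtopology by blast
  have T_open: "\<forall>x\<in>T. \<exists>n. \<forall>y\<in>P n. x + y \<in> T"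
    using T(1) by (simp add: openin_adic_topology[OF P])
  have "\<exists>n. \<forall>y\<in>Q n. x + y \<in> U" if x: "x \<in> U" for x
  proof -
    obtain n where n: "\<forall>y\<in>P n. x + y \<in> T" using T_open T(2) x by blast
    have "x + y \<in> U" if "y \<in> Q n" for y
    proof -
      have "x + y \<in> T" using n QP that by blast
      moreover have "x + y \<in> S" using stable T(2) x that by blast
      ultimately show ?thesis using T(2) by blast
    qed
    then show ?thesis by blast
  qed
  moreover have "U \<subseteq> S" using T(2) by blast
  ultimately show ?thesis unfolding openin_adic_topology[OF Q] by blast
qed

text \<open>The kernel of the derivation is \<open>J\<close>-adically open, since it contains \<open>J\<^sup>2\<close>, but it
contains no \<open>I\<close>-adic neighbourhood of \<open>0\<close> in \<open>\<complex>[X]\<^sup>\<circ>\<close>, since \<open>tail_ones n \<in> I\<^sup>n\<close>.\<close>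

lemma openin_Jadic_spec_der_kernel:
  "openin (adic_topology linrec Jpow) {x \<in> linrec. spec_der x = 0}"
proof -
  have "x + y \<in> linrec \<and> spec_der (x + y) = 0" if "x \<in> linrec" "spec_der x = 0" "y \<in> Jpow 2" for x y
  proof -
    have "y \<in> linrec" using that(3) Jpow_subset_linrec by blast
    then show ?thesis using that by (simp add: spec_der_add spec_der_Jpow2 linrec_add)
  qed
  then have "\<forall>x\<in>{x \<in> linrec. spec_der x = 0}. \<forall>y\<in>Jpow 2. x + y \<in> {x \<in> linrec. spec_der x = 0}"
    by blast
  then show ?thesis unfolding openin_adic_topology[OF antimono_Jpow] by blast
qed

lemma not_openin_Iadic_spec_der_kernel:
  "\<not> openin (subtopology (adic_topology UNIV Ipow) linrec) {x \<in> linrec. spec_der x = 0}"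
proof
  assume "openin (subtopology (adic_topology UNIV Ipow) linrec) {x \<in> linrec. spec_der x = 0}"
  then obtain T where T: "openin (adic_topology UNIV Ipow) T"
    "{x \<in> linrec. spec_der x = 0} = T \<inter> linrec"
    by (auto simp: openin_subtopology)
  have "0 \<in> linrec" by (rule linrec_finite_support[of 0]) simp
  moreover have "spec_der 0 = 0" using spec_der_gen_eigen[OF zero_in_gen_eigen] by simp
  ultimately have "0 \<in> T" using T(2) by blast
  then obtain n where "\<forall>y\<in>Ipow n. y \<in> T"
    using T(1) by (auto simp: openin_adic_topology[OF antimono_Ipow])
  moreover have "tail_ones n \<in> Ipow n" by (simp add: Ipow_iff tail_ones_def)
  ultimately have "tail_ones n \<in> {x \<in> linrec. spec_der x = 0}"
    using T(2) tail_ones_in_linrec by blast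
  then show False by (simp add: spec_der_tail_ones)
qed

lemma openin_Jadic_if_openin_Iadic_subtopology:
  "openin (subtopology (adic_topology UNIV Ipow) linrec) U \<Longrightarrow> openin (adic_topology linrec Jpow) U"
  by (rule openin_adic_if_openin_subtopology[OF antimono_Ipow antimono_Jpow Jpow_subset_Ipow])
    (use Jpow_subset_linrec linrec_add in blast)+

lemma inv_lim_Jpow_subset: "inv_lim linrec Jpow \<subseteq> inv_lim UNIV Ipow"
  using Jpow_subset_Ipow by (auto simp: inv_lim_def)

lemma lim_eq_Jpow_imp_Ipow: "lim_eq Jpow a b \<Longrightarrow> lim_eq Ipow a b"
  using Jpow_subset_Ipow by (auto simp: lim_eq_def)

theorem mainTheorem5:
  shows
   \<comment> \<open>the induced map iota-hat (identity on representatives) is well defined\<close>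
   "(\<forall>a\<in>inv_lim linrec Jpow. a \<in> inv_lim UNIV Ipow) \<and>
    (\<forall>a\<in>inv_lim linrec Jpow. \<forall>b\<in>inv_lim linrec Jpow. lim_eq Jpow a b \<longrightarrow> lim_eq Ipow a b) \<and>
   \<comment> \<open>surjective\<close>
    (\<forall>b\<in>inv_lim UNIV Ipow. \<exists>a\<in>inv_lim linrec Jpow. lim_eq Ipow a b) \<and>
   \<comment> \<open>split: a section which is a well-defined algebra homomorphism\<close>
    (\<exists>s. (\<forall>b\<in>inv_lim UNIV Ipow. s b \<in> inv_lim linrec Jpow) \<and>
         (\<forall>b\<in>inv_lim UNIV Ipow. \<forall>b'\<in>inv_lim UNIV Ipow.
             lim_eq Ipow b b' \<longrightarrow> lim_eq Jpow (s b) (s b')) \<and>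
         (\<forall>b\<in>inv_lim UNIV Ipow. lim_eq Ipow (s b) b) \<and>
         (\<forall>b\<in>inv_lim UNIV Ipow. \<forall>b'\<in>inv_lim UNIV Ipow.
             lim_eq Jpow (s (\<lambda>n. b n + b' n)) (\<lambda>n. s b n + s b' n)) \<and>
         (\<forall>b\<in>inv_lim UNIV Ipow. \<forall>c::complex.
             lim_eq Jpow (s (\<lambda>n m. c * b n m)) (\<lambda>n m. c * s b n m)) \<and>
         (\<forall>b\<in>inv_lim UNIV Ipow. \<forall>b'\<in>inv_lim UNIV Ipow.
             lim_eq Jpow (s (\<lambda>n. conv (b n) (b' n))) (\<lambda>n. conv (s b n) (s b' n))) \<and>
         lim_eq Jpow (s (\<lambda>n. eps)) (\<lambda>n. eps)) \<and>
   \<comment> \<open>not injective\<close>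
    (\<exists>a\<in>inv_lim linrec Jpow. lim_eq Ipow a (\<lambda>n. 0) \<and> \<not> lim_eq Jpow a (\<lambda>n. 0)) \<and>
   \<comment> \<open>explicit non-zero kernel element\<close>
    (let a = (\<lambda>n. phi1 - (\<Sum>k\<le>n. (\<lambda>m. (1 / fact k) * cpow xi k m))) in
       a \<in> inv_lim linrec Jpow \<and> lim_eq Ipow a (\<lambda>n. 0) \<and> \<not> lim_eq Jpow a (\<lambda>n. 0)) \<and>
   \<comment> \<open>J-adic topology strictly finer than the one induced from the I-adic topology\<close>
    (\<forall>U. openin (subtopology (adic_topology UNIV Ipow) linrec) U
          \<longrightarrow> openin (adic_topology linrec Jpow) U) \<and>
    \<not> (\<forall>U. openin (adic_topology linrec Jpow) U
          \<longrightarrow> openin (subtopology (adic_topology UNIV Ipow) linrec) U)"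
proof -
  have surj: "\<exists>a\<in>inv_lim linrec Jpow. lim_eq Ipow a b" if "b \<in> inv_lim UNIV Ipow" for b
    using that trunc_section_in_inv_lim lim_eq_Ipow_trunc_section by blast
  have noninj: "\<exists>a\<in>inv_lim linrec Jpow. lim_eq Ipow a (\<lambda>n. 0) \<and> \<not> lim_eq Jpow a (\<lambda>n. 0)"
    using tail_ones_in_inv_lim lim_eq_Ipow_tail_ones not_lim_eq_Jpow_tail_ones by blast
  have not_coarser: "\<not> (\<forall>U. openin (adic_topology linrec Jpow) U
                        \<longrightarrow> openin (subtopology (adic_topology UNIV Ipow) linrec) U)"
    using openin_Jadic_spec_der_kernel not_openin_Iadic_spec_der_kernel by blast
  show ?thesis
    unfolding Let_def kernel_witness_eq_tail_ones
    by (intro conjI exI[of _ trunc_section])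
      (simp_all add: surj noninj not_coarser openin_Jadic_if_openin_Iadic_subtopology subsetD[OF inv_lim_Jpow_subset]
        lim_eq_Jpow_imp_Ipow trunc_section_in_inv_lim lim_eq_trunc_section
        lim_eq_Ipow_trunc_section trunc_section_add trunc_section_cmult trunc_section_conv
        trunc_section_eps tail_ones_in_inv_lim lim_eq_Ipow_tail_ones not_lim_eq_Jpow_tail_ones)
qed

end
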